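(* Let $T$ be a tree on $N>2$ vertices with $M\ge 2$ leaves. Then $$R^+(T)\ge N(N-4)+2(N-1)\left[M+\frac{(N-M)^2}{2(N-1)-M}\right].$$
   Context: For vertices $i,j$ of a connected graph $G$, $R_{ij}$ denotes the effective resistance between $i$ and $j$ when every edge is a unit resistor. The additive degree-Kirchhoff index is $R^+(G)=\sum_{i<j}(d_i+d_j)R_{ij}$, where $d_i$ is the degree of vertex $i$. *)

theory Defs
  imports Complex_Main
begin

definition simple_graph :: "'a set \<Rightarrow> ('a \<Rightarrow> 'a \<Rightarrow> bool) \<Rightarrow> bool" where
  "simple_graph V E \<longleftrightarrow> finite V \<and> (\<forall>u v. E u v \<longrightarrow> u \<in> V \<and> v \<in> V)
     \<and> (\<forall>u v. E u v \<longrightarrow> E v u) \<and> (\<forall>v. \<not> E v v)"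

definition connected_graph :: "'a set \<Rightarrow> ('a \<Rightarrow> 'a \<Rightarrow> bool) \<Rightarrow> bool" where
  "connected_graph V E \<longleftrightarrow> V \<noteq> {} \<and> (\<forall>u\<in>V. \<forall>v\<in>V. E\<^sup>*\<^sup>* u v)"

definition is_cycle :: "('a \<Rightarrow> 'a \<Rightarrow> bool) \<Rightarrow> 'a list \<Rightarrow> bool" where
  "is_cycle E c \<longleftrightarrow> length c \<ge> 3 \<and> distinct c
     \<and> (\<forall>k. Suc k < length c \<longrightarrow> E (c ! k) (c ! Suc k)) \<and> E (last c) (hd c)"

definition is_tree :: "'a set \<Rightarrow> ('a \<Rightarrow> 'a \<Rightarrow> bool) \<Rightarrow> bool" where
  "is_tree V E \<longleftrightarrow> simple_graph V E \<and> connected_graph V E \<and> (\<nexists>c. is_cycle E c)"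

definition degree :: "'a set \<Rightarrow> ('a \<Rightarrow> 'a \<Rightarrow> bool) \<Rightarrow> 'a \<Rightarrow> nat" where
  "degree V E v = card {u\<in>V. E v u}"

definition leaves :: "'a set \<Rightarrow> ('a \<Rightarrow> 'a \<Rightarrow> bool) \<Rightarrow> 'a set" where
  "leaves V E = {v\<in>V. degree V E v = 1}"

text \<open>Effective resistance with unit resistors: inject unit current at i, extract at j;
  by Kirchhoff's laws the node potentials v satisfy (L v)_k = [k=i] - [k=j], and
  R_ij is the potential difference v i - v j (well defined for connected graphs).\<close>
definition eff_res :: "'a set \<Rightarrow> ('a \<Rightarrow> 'a \<Rightarrow> bool) \<Rightarrow> 'a \<Rightarrow> 'a \<Rightarrow> real" where
  "eff_res V E i j = (THE r. \<exists>pot :: 'a \<Rightarrow> real.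
     (\<forall>k\<in>V. (\<Sum>l\<in>{l\<in>V. E k l}. pot k - pot l)
              = (if k = i then 1 else 0) - (if k = j then 1 else 0))
     \<and> r = pot i - pot j)"

definition add_deg_kirchhoff :: "'a::linorder set \<Rightarrow> ('a \<Rightarrow> 'a \<Rightarrow> bool) \<Rightarrow> real" where
  "add_deg_kirchhoff V E =
     (\<Sum>(i, j)\<in>{(i, j). i \<in> V \<and> j \<in> V \<and> i < j}.
        (real (degree V E i) + real (degree V E j)) * eff_res V E i j)"

end

theory Submission
  imports Defs "HOL-Library.Transitive_Closure_Table"
begin

text \<open>In a tree every edge is a bridge, so the potential of a unit current from i to j drops by
  exactly one across each edge separating i from j and is constant across all other edges: R_ij is
  the number of separating edges. Hence R_ij \<ge> 1, and R_ij \<ge> 2 for non-adjacent i, j, so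
  R^+(T) \<ge> \<Sum>_{i<j} (d_i + d_j)(2 - [ij \<in> E]). As d_i + d_j \<le> N for adjacent vertices
  (there are no triangles) and \<Sum> d_i = 2(N - 1), this is at least (3N - 4)(N - 1).
  The claimed bound does not exceed that value: a tree with N > 2 vertices has M \<le> N - 1 leaves,
  and then the comparison is an elementary polynomial inequality.\<close>

definition del_edge :: "('a \<Rightarrow> 'a \<Rightarrow> bool) \<Rightarrow> 'a \<Rightarrow> 'a \<Rightarrow> 'a \<Rightarrow> 'a \<Rightarrow> bool" where
  "del_edge E a b x y \<longleftrightarrow> E x y \<and> \<not> ((x = a \<and> y = b) \<or> (x = b \<and> y = a))"

definition side :: "('a \<Rightarrow> 'a \<Rightarrow> bool) \<Rightarrow> 'a \<Rightarrow> 'a \<Rightarrow> 'a set" where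
  "side E a b = {x. (del_edge E a b)\<^sup>*\<^sup>* a x}"

definition separating_arcs :: "('a \<Rightarrow> 'a \<Rightarrow> bool) \<Rightarrow> 'a \<Rightarrow> 'a \<Rightarrow> ('a \<times> 'a) set" where
  "separating_arcs E i j = {(a, b). E a b \<and> i \<in> side E a b \<and> j \<in> side E b a}"

definition separation_potential :: "('a \<Rightarrow> 'a \<Rightarrow> bool) \<Rightarrow> 'a \<Rightarrow> 'a \<Rightarrow> 'a \<Rightarrow> real" where
  "separation_potential E i j x = (\<Sum>e\<in>separating_arcs E i j. of_bool (x \<in> side E (fst e) (snd e)))"

definition unit_current_potential ::
    "'a set \<Rightarrow> ('a \<Rightarrow> 'a \<Rightarrow> bool) \<Rightarrow> 'a \<Rightarrow> 'a \<Rightarrow> ('a \<Rightarrow> real) \<Rightarrow> bool" where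
  "unit_current_potential V E i j p \<longleftrightarrow> (\<forall>k\<in>V. (\<Sum>l\<in>{l\<in>V. E k l}. p k - p l)
     = (if k = i then 1 else 0) - (if k = j then 1 else 0))"

lemma del_edge_commute: "del_edge E a b = del_edge E b a"
  unfolding del_edge_def by (intro ext) auto

lemma side_self: "a \<in> side E a b"
  by (simp add: side_def)

lemma sum_pairs_less_symmetric:
  fixes V :: "'a::linorder set" and f :: "'a \<times> 'a \<Rightarrow> 'b::comm_semiring_1"
  assumes "finite V" and sym: "\<And>i j. f (j, i) = f (i, j)"
  shows "(\<Sum>p\<in>Sigma V (\<lambda>i. V - {i}). f p) = 2 * (\<Sum>p\<in>{(i, j). i \<in> V \<and> j \<in> V \<and> i < j}. f p)"
proof -
  let ?P = "{(i, j). i \<in> V \<and> j \<in> V \<and> i < j}"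
  let ?Q = "{(i, j). i \<in> V \<and> j \<in> V \<and> j < i}"
  have fin: "finite ?P" "finite ?Q"
    using \<open>finite V\<close> by (auto intro: rev_finite_subset[of "V \<times> V"])
  have "?Q = prod.swap ` ?P" by auto
  then have "(\<Sum>p\<in>?Q. f p) = (\<Sum>p\<in>?P. f (prod.swap p))"
    by (simp add: sum.reindex swap_inj_on)
  also have "\<dots> = (\<Sum>p\<in>?P. f p)"
    by (rule sum.cong) (auto simp: sym)
  finally have "(\<Sum>p\<in>?Q. f p) = (\<Sum>p\<in>?P. f p)" .
  moreover have "Sigma V (\<lambda>i. V - {i}) = ?P \<union> ?Q" "?P \<inter> ?Q = {}" by auto
  ultimately show ?thesis
    using sum.union_disjoint[OF fin, of f] by (simp add: mult_2)
qed

locale connected_simple_graph =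
  fixes V :: "'a set" and E :: "'a \<Rightarrow> 'a \<Rightarrow> bool"
  assumes simple: "simple_graph V E" and connected: "connected_graph V E"
begin

lemma finite_V: "finite V"
  using simple by (simp add: simple_graph_def)

lemma edge_in_V: "E x y \<Longrightarrow> x \<in> V \<and> y \<in> V"
  using simple by (simp add: simple_graph_def)

lemma edge_sym: "E x y \<Longrightarrow> E y x"
  using simple by (simp add: simple_graph_def)

lemma no_loop: "\<not> E x x"
  using simple by (simp add: simple_graph_def)

lemma reachable: "u \<in> V \<Longrightarrow> v \<in> V \<Longrightarrow> E\<^sup>*\<^sup>* u v"
  using connected by (simp add: connected_graph_def)

lemma V_nonempty: "V \<noteq> {}"
  using connected by (simp add: connected_graph_def)

lemma finite_neighbours: "finite {l\<in>V. E k l}"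
  using finite_V by simp

text \<open>Maximum principle: a maximum of a harmonic function propagates along edges.\<close>
lemma harmonic_imp_constant:
  assumes harmonic: "\<forall>k\<in>V. (\<Sum>l\<in>{l\<in>V. E k l}. h k - h l) = (0::real)"
    and "x \<in> V" "y \<in> V"
  shows "h x = h y"
proof -
  define m where "m = Max (h ` V)"
  have le_m: "h z \<le> m" if "z \<in> V" for z
    unfolding m_def using finite_V that by (intro Max_ge) auto
  have "m \<in> h ` V"
    unfolding m_def using finite_V V_nonempty by (intro Max_in) auto
  then obtain k0 where k0: "k0 \<in> V" "h k0 = m" by auto
  have "h z = m" if "z \<in> V" for z
    using reachable[OF k0(1) that]
  proof (induction rule: rtranclp_induct)
    case base then show ?case using k0 by simp
  next
    case (step y z)
    have nonneg: "\<forall>l\<in>{l\<in>V. E y l}. 0 \<le> h y - h l"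
      using le_m step.IH by auto
    have "(\<Sum>l\<in>{l\<in>V. E y l}. h y - h l) = 0"
      using harmonic edge_in_V[OF step.hyps(2)] by blast
    then have "\<forall>l\<in>{l\<in>V. E y l}. h y - h l = 0"
      using nonneg sum_nonneg_eq_0_iff[OF finite_neighbours, where f = "\<lambda>l. h y - h l"] by blast
    then show ?case
      using step.IH step.hyps(2) edge_in_V[OF step.hyps(2)] by auto
  qed
  then show ?thesis using assms by simp
qed

lemma eff_res_eqI:
  assumes "i \<in> V" "j \<in> V" and p: "unit_current_potential V E i j p"
  shows "eff_res V E i j = p i - p j"
  unfolding eff_res_def
proof (rule the_equality)
  show "\<exists>q. (\<forall>k\<in>V. (\<Sum>l\<in>{l\<in>V. E k l}. q k - q l)
      = (if k = i then 1 else 0) - (if k = j then 1 else 0)) \<and> p i - p j = q i - q j"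
    using p unfolding unit_current_potential_def by blast
next
  fix r :: real assume "\<exists>q. (\<forall>k\<in>V. (\<Sum>l\<in>{l\<in>V. E k l}. q k - q l)
      = (if k = i then 1 else 0) - (if k = j then 1 else 0)) \<and> r = q i - q j"
  then obtain q where q: "unit_current_potential V E i j q" and r: "r = q i - q j"
    unfolding unit_current_potential_def by blast
  have "\<forall>k\<in>V. (\<Sum>l\<in>{l\<in>V. E k l}. (p k - q k) - (p l - q l)) = 0"
  proof
    fix k assume "k \<in> V"
    have "(\<Sum>l\<in>{l\<in>V. E k l}. (p k - q k) - (p l - q l))
        = (\<Sum>l\<in>{l\<in>V. E k l}. p k - p l) - (\<Sum>l\<in>{l\<in>V. E k l}. q k - q l)"
      by (simp add: sum_subtractf[symmetric] algebra_simps)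
    then show "(\<Sum>l\<in>{l\<in>V. E k l}. (p k - q k) - (p l - q l)) = 0"
      using p q \<open>k \<in> V\<close> by (simp add: unit_current_potential_def)
  qed
  from harmonic_imp_constant[OF this assms(1,2)] show "r = p i - p j"
    using r by simp
qed

lemma sum_degree_eq_card_arcs: "(\<Sum>x\<in>V. degree V E x) = card {(a, b). E a b}"
proof -
  have "{(a, b). E a b} = Sigma V (\<lambda>a. {b\<in>V. E a b})"
    using edge_in_V by auto
  then show ?thesis
    unfolding degree_def using finite_V by simp
qed

end

locale tree = connected_simple_graph +
  assumes acyclic: "\<nexists>c. is_cycle E c"

lemma is_tree_imp_tree: "is_tree V E \<Longrightarrow> tree V E"
  unfolding is_tree_def tree_def tree_axioms_def connected_simple_graph_def by blast

context tree
begin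

lemma del_edge_sym: "del_edge E a b x y \<Longrightarrow> del_edge E a b y x"
  unfolding del_edge_def using edge_sym by blast

lemma del_edge_rtranclp_sym: "(del_edge E a b)\<^sup>*\<^sup>* x y \<Longrightarrow> (del_edge E a b)\<^sup>*\<^sup>* y x"
  by (rule sympD[OF symp_rtranclp]) (auto intro: sympI del_edge_sym)

lemma side_rtranclp_closed: "x \<in> side E a b \<Longrightarrow> (del_edge E a b)\<^sup>*\<^sup>* x y \<Longrightarrow> y \<in> side E a b"
  unfolding side_def by (auto intro: rtranclp_trans)

lemma side_del_edge_iff:
  assumes "del_edge E a b x y"
  shows "x \<in> side E a b \<longleftrightarrow> y \<in> side E a b"
  using side_rtranclp_closed assms del_edge_sym[OF assms] by blast

text \<open>Every edge of a tree is a bridge: a path from a to b avoiding the edge would close a cycle.\<close>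
lemma edge_not_in_side:
  assumes "E a b"
  shows "b \<notin> side E a b"
proof
  assume "b \<in> side E a b"
  then obtain xs where "rtrancl_path (del_edge E a b) a xs b"
    by (auto simp: side_def rtranclp_eq_rtrancl_path)
  then obtain ys where path: "rtrancl_path (del_edge E a b) a ys b" and dist: "distinct (a # ys)"
    by (rule rtrancl_path_distinct)
  have "ys \<noteq> []" using path assms no_loop by (auto elim: rtrancl_path.cases)
  then have last: "last ys = b" using rtrancl_path_last[OF path] by simp
  have adj: "del_edge E a b ((a # ys) ! k) ((a # ys) ! Suc k)" if "Suc k < length (a # ys)" for k
    using rtrancl_path_nth[OF path, of k] that by simp
  have "ys \<noteq> [b]"
  proof
    assume "ys = [b]"
    then show False using adj[of 0] by (simp add: del_edge_def)
  qed
  then have "length (a # ys) \<ge> 3"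
    using \<open>ys \<noteq> []\<close> last by (cases ys rule: rev_cases) (auto simp: Suc_le_eq)
  moreover have "E ((a # ys) ! k) ((a # ys) ! Suc k)" if "Suc k < length (a # ys)" for k
    using adj[OF that] unfolding del_edge_def by blast
  moreover have "E (last (a # ys)) (hd (a # ys))"
    using last \<open>ys \<noteq> []\<close> edge_sym[OF assms] by simp
  ultimately have "is_cycle E (a # ys)"
    unfolding is_cycle_def using dist by blast
  then show False using acyclic by blast
qed

lemma side_cases:
  assumes "E a b" "x \<in> V"
  shows "x \<in> side E a b \<or> x \<in> side E b a"
  using reachable[OF conjunct1[OF edge_in_V[OF assms(1)]] assms(2)]
proof (induction rule: rtranclp_induct)
  case base then show ?case by (simp add: side_self)
next
  case (step y z)
  show ?case
  proof (cases "(y = a \<and> z = b) \<or> (y = b \<and> z = a)")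
    case True then show ?thesis by (auto simp: side_self)
  next
    case False
    then have "del_edge E a b y z" "del_edge E b a y z"
      using step.hyps(2) unfolding del_edge_def by auto
    with step.IH show ?thesis
      using side_del_edge_iff[of a b y z] side_del_edge_iff[of b a y z] by blast
  qed
qed

lemma side_disjoint:
  assumes "E a b" "x \<in> side E a b" "x \<in> side E b a"
  shows False
proof -
  have "(del_edge E a b)\<^sup>*\<^sup>* x b"
    using assms(3) del_edge_rtranclp_sym unfolding side_def del_edge_commute[of E b a] by blast
  then have "b \<in> side E a b" using side_rtranclp_closed assms(2) by blast
  then show False using edge_not_in_side[OF assms(1)] by blast
qed

lemma side_swap_iff: "E a b \<Longrightarrow> x \<in> V \<Longrightarrow> x \<in> side E b a \<longleftrightarrow> x \<notin> side E a b"
  using side_cases side_disjoint by blast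

lemma neighbour_towards:
  assumes "k \<in> V" "x \<in> V" "k \<noteq> x"
  shows "\<exists>l. E k l \<and> x \<in> side E l k"
  using reachable[OF assms(1,2)] assms(3)
proof (induction rule: rtranclp_induct)
  case base then show ?case by simp
next
  case (step y z)
  show ?case
  proof (cases "y = k")
    case True then show ?thesis using step.hyps(2) side_self by metis
  next
    case False
    then obtain l where l: "E k l" "y \<in> side E l k" using step.IH by blast
    have "del_edge E l k y z" using step.hyps(2) False step.prems unfolding del_edge_def by auto
    then show ?thesis using l side_del_edge_iff by blast
  qed
qed

lemma neighbour_towards_unique:
  assumes "E k l" "E k l'" "x \<in> side E l k" "x \<in> side E l' k"
  shows "l = l'"
proof (rule ccontr)
  assume "l \<noteq> l'"
  have k_not_side: "k \<notin> side E l' k"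
    using edge_not_in_side[OF edge_sym[OF assms(2)]] .
  text \<open>A path from x avoiding the edge l'k cannot cross the edge lk, as it would have to reach k.\<close>
  have "y \<in> side E l k" if "(del_edge E l' k)\<^sup>*\<^sup>* x y" for y
    using that
  proof (induction rule: rtranclp_induct)
    case base show ?case using assms(3) .
  next
    case (step y z)
    have "y \<in> side E l' k" "z \<in> side E l' k"
      using side_rtranclp_closed[OF assms(4) step.hyps(1)]
        side_rtranclp_closed[OF assms(4) rtranclp.rtrancl_into_rtrancl[OF step.hyps]] .
    then have "del_edge E l k y z"
      using step.hyps(2) k_not_side unfolding del_edge_def by auto
    with step.IH show ?case using side_del_edge_iff by blast
  qed
  moreover have "(del_edge E l' k)\<^sup>*\<^sup>* x l'"
    using assms(4) del_edge_rtranclp_sym unfolding side_def by blast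
  ultimately have "l' \<in> side E l k" by blast
  moreover have "del_edge E l k l' k"
    using edge_sym[OF assms(2)] \<open>l \<noteq> l'\<close> unfolding del_edge_def by auto
  ultimately have "k \<in> side E l k" by (simp add: side_del_edge_iff)
  then show False using edge_not_in_side[OF edge_sym[OF assms(1)]] by blast
qed

lemma card_neighbours_towards:
  assumes "k \<in> V" "x \<in> V"
  shows "card {l\<in>V. E k l \<and> x \<in> side E l k} = (if x = k then 0 else 1)"
proof (cases "x = k")
  case True
  then have "{l\<in>V. E k l \<and> x \<in> side E l k} = {}"
    using edge_not_in_side edge_sym by blast
  with True show ?thesis by (metis card.empty)
next
  case False
  then obtain l where l: "E k l" "x \<in> side E l k"
    using neighbour_towards[OF assms] by metis
  then have "{l\<in>V. E k l \<and> x \<in> side E l k} = {l}"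
    using edge_in_V neighbour_towards_unique by blast
  with False show ?thesis by simp
qed

lemma finite_separating_arcs: "finite (separating_arcs E i j)"
proof (rule finite_subset)
  show "separating_arcs E i j \<subseteq> V \<times> V"
    unfolding separating_arcs_def using edge_in_V by auto
qed (simp add: finite_V)

lemma separation_potential_edge_diff:
  assumes "E k l" "i \<in> V" "j \<in> V"
  shows "separation_potential E i j k - separation_potential E i j l
    = of_bool (j \<in> side E l k) - of_bool (i \<in> side E l k)"
proof -
  let ?S = "separating_arcs E i j"
  have k_ne_l: "k \<noteq> l" using assms(1) no_loop by blast
  have crossing: "of_bool (k \<in> side E a b) - of_bool (l \<in> side E a b)
      = (of_bool ((a, b) = (k, l)) - of_bool ((a, b) = (l, k)) :: real)" for a b
  proof (cases "(a, b) \<in> {(k, l), (l, k)}")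
    case True
    then show ?thesis
      using k_ne_l side_self[of k E l] side_self[of l E k]
        edge_not_in_side[OF assms(1)] edge_not_in_side[OF edge_sym[OF assms(1)]]
      by auto
  next
    case False
    then have "del_edge E a b k l"
      using assms(1) unfolding del_edge_def by auto
    then have "k \<in> side E a b \<longleftrightarrow> l \<in> side E a b"
      by (rule side_del_edge_iff)
    with False show ?thesis by auto
  qed
  have "separation_potential E i j k - separation_potential E i j l
      = (\<Sum>e\<in>?S. of_bool (e = (k, l)) - of_bool (e = (l, k)) :: real)"
    unfolding separation_potential_def sum_subtractf[symmetric] using crossing by (simp add: prod_eq_iff)
  also have "\<dots> = of_bool ((k, l) \<in> ?S) - of_bool ((l, k) \<in> ?S)"
    using finite_separating_arcs by (simp add: sum_subtractf)
  also have "\<dots> = of_bool (j \<in> side E l k) - of_bool (i \<in> side E l k)"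
    using side_swap_iff[OF assms(1)] assms edge_sym[OF assms(1)]
    by (auto simp: separating_arcs_def)
  finally show ?thesis .
qed

lemma unit_current_separation_potential:
  assumes "i \<in> V" "j \<in> V"
  shows "unit_current_potential V E i j (separation_potential E i j)"
  unfolding unit_current_potential_def
proof
  fix k assume "k \<in> V"
  have "(\<Sum>l\<in>{l\<in>V. E k l}. separation_potential E i j k - separation_potential E i j l)
      = (\<Sum>l\<in>{l\<in>V. E k l}. of_bool (j \<in> side E l k) - of_bool (i \<in> side E l k))"
    using separation_potential_edge_diff assms by (intro sum.cong) auto
  also have "\<dots> = real (card {l\<in>V. E k l \<and> j \<in> side E l k}) - real (card {l\<in>V. E k l \<and> i \<in> side E l k})"
    using finite_neighbours by (simp add: sum_subtractf Int_def)
  also have "\<dots> = (if k = i then 1 else 0) - (if k = j then 1 else 0)"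
    using card_neighbours_towards \<open>k \<in> V\<close> assms by auto
  finally show "(\<Sum>l\<in>{l\<in>V. E k l}. separation_potential E i j k - separation_potential E i j l)
      = (if k = i then 1 else 0) - (if k = j then 1 else 0)" .
qed

lemma eff_res_eq_card_separating_arcs:
  assumes "i \<in> V" "j \<in> V"
  shows "eff_res V E i j = card (separating_arcs E i j)"
proof -
  have "separation_potential E i j i = (\<Sum>e\<in>separating_arcs E i j. 1)"
    unfolding separation_potential_def by (rule sum.cong) (auto simp: separating_arcs_def)
  moreover have "separation_potential E i j j = 0"
    unfolding separation_potential_def
    by (rule sum.neutral) (auto simp: separating_arcs_def dest: side_disjoint)
  ultimately show ?thesis
    using eff_res_eqI[OF assms unit_current_separation_potential[OF assms]] by simp
qed

lemma two_minus_adjacent_le_eff_res: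
  assumes "i \<in> V" "j \<in> V" "i \<noteq> j"
  shows "2 - of_bool (E i j) \<le> eff_res V E i j"
proof -
  obtain l where l: "E i l" "j \<in> side E l i" using neighbour_towards assms by blast
  obtain u where u: "E j u" "i \<in> side E u j" using neighbour_towards assms by metis
  have "{(i, l), (u, j)} \<subseteq> separating_arcs E i j"
    using l u edge_sym[OF u(1)] side_self unfolding separating_arcs_def by auto
  then have "card {(i, l), (u, j)} \<le> card (separating_arcs E i j)"
    using finite_separating_arcs by (rule card_mono[rotated])
  moreover have "2 - of_bool (E i j) \<le> real (card {(i, l), (u, j)})"
    using l by (cases "(i, l) = (u, j)") auto
  ultimately show ?thesis
    using eff_res_eq_card_separating_arcs[OF assms(1,2)] by linarith
qed

text \<open>Counting arcs by the side of a fixed root r they point to: each vertex other than r has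
  exactly one neighbour towards r, and every edge points towards r in exactly one direction.\<close>
lemma card_arcs: "card {(a, b). E a b} = 2 * (card V - 1)"
proof -
  obtain r where r: "r \<in> V" using V_nonempty by blast
  let ?A = "{(a, b). E a b}"
  have A_Sigma: "?A = Sigma V (\<lambda>a. {b\<in>V. E a b})" using edge_in_V by auto
  have "(\<Sum>(a, b)\<in>?A. of_bool (r \<in> side E b a)) = (\<Sum>a\<in>V. card {b\<in>V. E a b \<and> r \<in> side E b a})"
    unfolding A_Sigma using finite_V by (simp add: sum.Sigma[symmetric] Int_def)
  also have "\<dots> = (\<Sum>a\<in>V. if r = a then 0 else 1)"
    using card_neighbours_towards r by (intro sum.cong) auto
  also have "\<dots> = card V - 1"
    using finite_V r by (simp add: sum.If_cases Diff_eq[symmetric])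
  finally have towards: "(\<Sum>(a, b)\<in>?A. of_bool (r \<in> side E b a)) = card V - 1" .
  have E_comm: "E a b \<longleftrightarrow> E b a" for a b
    using edge_sym by blast
  have swap: "(\<Sum>(a, b)\<in>?A. of_bool (r \<in> side E a b)) = (\<Sum>(a, b)\<in>?A. of_bool (r \<in> side E b a))"
    by (rule sum.reindex_bij_witness[where i = prod.swap and j = prod.swap]) (auto simp: E_comm)
  have "card ?A = (\<Sum>(a, b)\<in>?A. of_bool (r \<in> side E b a)) + (\<Sum>(a, b)\<in>?A. of_bool (r \<in> side E a b))"
    unfolding card_eq_sum sum.distrib[symmetric] using side_swap_iff[OF _ r] by (intro sum.cong) auto
  with swap towards show ?thesis by (metis mult_2)
qed

lemma edge_degree_sum_le_card:
  assumes "E i j"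
  shows "degree V E i + degree V E j \<le> card V"
proof -
  have "{u\<in>V. E i u} \<inter> {u\<in>V. E j u} = {}"
  proof (rule ccontr)
    assume "{u\<in>V. E i u} \<inter> {u\<in>V. E j u} \<noteq> {}"
    then obtain u where u: "E i u" "E j u" by blast
    have "i \<noteq> j" "u \<noteq> i" "u \<noteq> j"
      using assms u no_loop by metis+
    then have "del_edge E i j i u" "del_edge E j i j u"
      using u unfolding del_edge_def by auto
    then have "u \<in> side E i j" "u \<in> side E j i"
      using side_del_edge_iff side_self[of i E j] side_self[of j E i] by blast+
    then show False using side_disjoint[OF assms] by blast
  qed
  then have "degree V E i + degree V E j = card ({u\<in>V. E i u} \<union> {u\<in>V. E j u})"
    unfolding degree_def using finite_V by (simp add: card_Un_disjoint)
  also have "\<dots> \<le> card V" using finite_V by (intro card_mono) auto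
  finally show ?thesis .
qed

lemma card_leaves_less:
  assumes "2 < card V"
  shows "card (leaves V E) < card V"
proof -
  have sub: "leaves V E \<subseteq> V" unfolding leaves_def by auto
  have "leaves V E \<noteq> V"
  proof
    assume "leaves V E = V"
    then have "\<forall>x\<in>V. degree V E x = 1" unfolding leaves_def by blast
    then have "(\<Sum>x\<in>V. degree V E x) = card V" by simp
    then show False using sum_degree_eq_card_arcs card_arcs assms by linarith
  qed
  then show ?thesis using psubset_card_mono[OF finite_V] sub by blast
qed

lemma sum_offdiag_degree_weight_ge:
  "(3 * real (card V) - 4) * (\<Sum>x\<in>V. real (degree V E x))
    \<le> (\<Sum>(i, j)\<in>Sigma V (\<lambda>i. V - {i}). (real (degree V E i) + real (degree V E j)) * (2 - of_bool (E i j)))"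
proof -
  define d where "d x = real (degree V E x)" for x
  define S where "S = (\<Sum>x\<in>V. d x)"
  define N where "N = real (card V)"
  have row: "(N - 4) * d i + 2 * S \<le> (\<Sum>j\<in>V - {i}. (d i + d j) * (2 - of_bool (E i j)))"
    if "i \<in> V" for i
  proof -
    have "(\<Sum>j\<in>V - {i}. 2 * d i + 2 * d j - N * of_bool (E i j))
        \<le> (\<Sum>j\<in>V - {i}. (d i + d j) * (2 - of_bool (E i j)))"
    proof (rule sum_mono)
      fix j
      have "E i j \<Longrightarrow> d i + d j \<le> N"
        using edge_degree_sum_le_card unfolding d_def N_def by (metis of_nat_add of_nat_mono)
      then show "2 * d i + 2 * d j - N * of_bool (E i j) \<le> (d i + d j) * (2 - of_bool (E i j))"
        by (cases "E i j") auto
    qed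
    moreover have "(\<Sum>j\<in>V - {i}. 2 * d i + 2 * d j - N * of_bool (E i j)) = (N - 4) * d i + 2 * S"
    proof -
      have "(V - {i}) \<inter> {j. E i j} = {j\<in>V. E i j}"
        using no_loop by blast
      then have nbrs: "(\<Sum>j\<in>V - {i}. of_bool (E i j)) = d i"
        using finite_V unfolding d_def degree_def by simp
      have others: "(\<Sum>j\<in>V - {i}. d j) = S - d i"
        unfolding S_def using finite_V that by (simp add: sum_diff1)
      have "0 < card V"
        using finite_V that card_gt_0_iff by blast
      then have count: "real (card (V - {i})) = N - 1"
        using finite_V that unfolding N_def by (simp add: Suc_le_eq)
      have "(\<Sum>j\<in>V - {i}. 2 * d i + 2 * d j - N * of_bool (E i j))
          = 2 * d i * real (card (V - {i})) + 2 * (\<Sum>j\<in>V - {i}. d j) - N * (\<Sum>j\<in>V - {i}. of_bool (E i j))"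
        by (simp add: sum_subtractf sum.distrib sum_distrib_left)
      also have "\<dots> = (N - 4) * d i + 2 * S"
        unfolding nbrs others count by (simp add: algebra_simps)
      finally show ?thesis .
    qed
    ultimately show ?thesis by simp
  qed
  have "(\<Sum>i\<in>V. (N - 4) * d i + 2 * S) = (N - 4) * S + N * (2 * S)"
    unfolding S_def N_def by (simp add: sum.distrib sum_distrib_left[symmetric])
  then have "(3 * N - 4) * S = (\<Sum>i\<in>V. (N - 4) * d i + 2 * S)"
    by (simp add: algebra_simps)
  also have "\<dots> \<le> (\<Sum>i\<in>V. \<Sum>j\<in>V - {i}. (d i + d j) * (2 - of_bool (E i j)))"
    using row by (rule sum_mono)
  also have "\<dots> = (\<Sum>(i, j)\<in>Sigma V (\<lambda>i. V - {i}). (d i + d j) * (2 - of_bool (E i j)))"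
    using finite_V by (simp add: sum.Sigma)
  finally show ?thesis unfolding d_def S_def N_def .
qed

end

text \<open>The value on the right is attained by the star.\<close>
lemma add_deg_kirchhoff_ge_star:
  fixes V :: "'a::linorder set"
  assumes "tree V E"
  shows "(3 * real (card V) - 4) * (real (card V) - 1) \<le> add_deg_kirchhoff V E"
proof -
  interpret tree V E by fact
  define w where "w = (\<lambda>(i, j). (real (degree V E i) + real (degree V E j)) * (2 - of_bool (E i j)))"
  let ?P = "{(i, j). i \<in> V \<and> j \<in> V \<and> i < j}"
  have "card V \<ge> 1"
    using finite_V V_nonempty by (simp add: Suc_le_eq card_gt_0_iff)
  then have "(\<Sum>x\<in>V. real (degree V E x)) = 2 * (real (card V) - 1)"
    using sum_degree_eq_card_arcs card_arcs by (simp flip: of_nat_sum)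
  then have "(3 * real (card V) - 4) * (real (card V) - 1)
      = (3 * real (card V) - 4) * (\<Sum>x\<in>V. real (degree V E x)) / 2"
    by simp
  also have "\<dots> \<le> (\<Sum>p\<in>Sigma V (\<lambda>i. V - {i}). w p) / 2"
    using sum_offdiag_degree_weight_ge unfolding w_def by (intro divide_right_mono) simp_all
  also have "\<dots> = (\<Sum>p\<in>?P. w p)"
  proof -
    have "w (j, i) = w (i, j)" for i j
    proof -
      have "E j i = E i j" using edge_sym by blast
      then show ?thesis unfolding w_def by (simp add: add.commute)
    qed
    then show ?thesis using sum_pairs_less_symmetric[OF finite_V, of w] by simp
  qed
  also have "\<dots> \<le> add_deg_kirchhoff V E"
    unfolding add_deg_kirchhoff_def w_def
  proof (rule sum_mono, clarify)
    fix i j assume "i \<in> V" "j \<in> V" "i < j"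
    then show "(real (degree V E i) + real (degree V E j)) * (2 - of_bool (E i j))
        \<le> (real (degree V E i) + real (degree V E j)) * eff_res V E i j"
      using two_minus_adjacent_le_eff_res by (intro mult_left_mono) auto
  qed
  finally show ?thesis .
qed

lemma leaf_bound_le_star_bound:
  fixes n m :: real
  assumes "1 < n" "m \<le> n - 1"
  shows "n * (n - 4) + 2 * (n - 1) * (m + (n - m)^2 / (2 * (n - 1) - m)) \<le> (3 * n - 4) * (n - 1)"
proof -
  have D: "0 < 2 * (n - 1) - m" using assms by simp
  have "m + (n - m)^2 / (2 * (n - 1) - m) = (n^2 - 2 * m) / (2 * (n - 1) - m)"
    using D by (simp add: field_simps power2_eq_square)
  moreover have "2 * (n - 1) * (n^2 - 2 * m) \<le> (2 * n^2 - 3 * n + 4) * (2 * (n - 1) - m)"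
  proof -
    have "(2 * n^2 - 3 * n + 4) * (2 * (n - 1) - m) - 2 * (n - 1) * (n^2 - 2 * m)
        = n * (n - 1) + (n - 1 - m) * (2 * (n - 2)^2 + n)"
      by (simp add: algebra_simps power2_eq_square)
    moreover have "0 \<le> (n - 1 - m) * (2 * (n - 2)^2 + n)" "0 \<le> n * (n - 1)"
      using assms by simp_all
    ultimately show ?thesis by linarith
  qed
  ultimately have "2 * (n - 1) * (m + (n - m)^2 / (2 * (n - 1) - m)) \<le> 2 * n^2 - 3 * n + 4"
    using D by (simp add: pos_divide_le_eq)
  moreover have "(3 * n - 4) * (n - 1) = n * (n - 4) + (2 * n^2 - 3 * n + 4)"
    by (simp add: algebra_simps power2_eq_square)
  ultimately show ?thesis by linarith
qed

theorem corollary1: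
  fixes V :: "'a::linorder set" and E :: "'a \<Rightarrow> 'a \<Rightarrow> bool" and N M :: nat
  assumes "is_tree V E"
    and "N = card V" and "N > 2"
    and "M = card (leaves V E)" and "M \<ge> 2"
  shows "add_deg_kirchhoff V E \<ge>
    real N * (real N - 4) + 2 * (real N - 1) *
      (real M + (real N - real M)^2 / (2 * (real N - 1) - real M))"
proof -
  have T: "tree V E" using assms(1) by (rule is_tree_imp_tree)
  have "M < N" using tree.card_leaves_less[OF T] assms(2-4) by simp
  then have "real M \<le> real N - 1" by linarith
  then have "real N * (real N - 4) + 2 * (real N - 1) *
      (real M + (real N - real M)^2 / (2 * (real N - 1) - real M)) \<le> (3 * real N - 4) * (real N - 1)"
    using assms(3) by (intro leaf_bound_le_star_bound) auto
  also have "\<dots> \<le> add_deg_kirchhoff V E"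
    using add_deg_kirchhoff_ge_star[OF T] assms(2) by simp
  finally show ?thesis .
qed

end
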